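(* Let $V$ be a vertex operator superalgebra, $g$ an automorphism of $V$ of finite order, $T'$ the order of $\sigma g$, and let $n\in\frac{1}{T'}\mathbb{Z}_{\ge 0}$ with $\ell=\lfloor n\rfloor$. Then $A_{g,n}(V)$ is a quotient algebra of $A_{\sigma,\ell}(V^{\langle\sigma g\rangle})$, where $\langle\sigma g\rangle$ is the cyclic group generated by $\sigma g$, $V^{\langle\sigma g\rangle}$ is the fixed-point vertex operator subsuperalgebra, and $\sigma$ is regarded as an automorphism of $V^{\langle\sigma g\rangle}$. More precisely, $V^{\langle\sigma g\rangle}=V^{0*}$, the identity map of $V^{0*}$ sends $O_{\sigma,\ell}(V^{\langle\sigma g\rangle})$ into $O_{g,n}(V)$, the products $*_{\sigma,\ell}$ and $*_{g,n}$ coincide on $V^{0*}$, and the induced map $A_{\sigma,\ell}(V^{\langle\sigma g\rangle})\to A_{g,n}(V)$ is a surjective algebra homomorphism.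
   Context: A vertex operator superalgebra $V=\bigoplus_{n\in\frac12\mathbb Z}V_n=V_{\bar0}\oplus V_{\bar1}$ has $V_{\bar0}=\bigoplus_{n\in\mathbb Z}V_n$, $V_{\bar1}=\bigoplus_{n\in\frac12+\mathbb Z}V_n$; its canonical automorphism $\sigma$ acts as $(-1)^i$ on $V_{\bar i}$. Write $Y(v,z)=\sum v_nz^{-n-1}$, $Y(\omega,z)=\sum L(n)z^{-n-2}$. For $g$ of finite order with $T'=o(\sigma g)$, let $V^{r*}=\{v\in V:\sigma g v=e^{-2\pi i r/T'}v\}$ for $0\le r\le T'-1$. Write $n=\ell+\frac{i}{T'}$ with $\ell,i\in\mathbb Z_{\ge0}$, $0\le i\le T'-1$; for $0\le r\le T'-1$ set $\delta_i(r)=1$ if $r\le i$, $\delta_i(r)=0$ if $i<r\le T'-1$, and $\delta_i(T')=0$. For $v\in V$ and homogeneous $u\in V^{r*}$ define $u\circ_{g,n}v=\mathrm{Res}_z Y(u,z)v\,\frac{(1+z)^{\mathrm{wt}\,u-1+\delta_i(r)+\ell+r/T'}}{z^{2\ell+\delta_i(r)+\delta_i(T'-r)+1}}$, and $u*_{g,n}v=\sum_{m=0}^{\ell}(-1)^m\binom{m+\ell}{\ell}\mathrm{Res}_zY(u,z)v\frac{(1+z)^{\mathrm{wt}\,u+\ell}}{z^{\ell+m+1}}$ if $r=0$, and $u*_{g,n}v=0$ if $r>0$; extend bilinearly. $O_{g,n}(V)$ is the span of all $u\circ_{g,n}v$ and $L(-1)u+L(0)u$ ($u,v\in V$), and $A_{g,n}(V)=V/O_{g,n}(V)$,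 which is known to be an associative algebra under the product induced by $*_{g,n}$. For a vertex operator superalgebra $U$ with automorphism $\sigma$ (so $\sigma\cdot\sigma=1$, $T'=1$), $A_{\sigma,\ell}(U)$ is defined by the same recipe; in particular $O_{\sigma,\ell}(U)$ is spanned by $\mathrm{Res}_zY(u,z)v\frac{(1+z)^{\mathrm{wt}\,u+\ell}}{z^{2\ell+2}}$ and $(L(-1)+L(0))u$. *)

theory Defs
  imports Complex_Main
begin

text \<open>The underlying space of V is the whole type 'v (an additive group), with a
complex scalar multiplication.  md u m v is the mode u_m v of Y(u,z)=sum u_m z^(-m-1).
gr w is the weight space V_w (w real; nonzero only for w in (1/2)Z).\<close>

record 'v vosa =
  scal :: "complex \<Rightarrow> 'v \<Rightarrow> 'v"
  md   :: "'v \<Rightarrow> int \<Rightarrow> 'v \<Rightarrow> 'v"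
  vac  :: 'v
  cv   :: 'v
  gr   :: "real \<Rightarrow> 'v set"
  cc   :: complex

text \<open>Sum of a finitely supported sequence (all sums occurring below are finite
by the truncation axiom).\<close>
definition fsum :: "(nat \<Rightarrow> 'v::comm_monoid_add) \<Rightarrow> 'v" where
  "fsum f = sum f {i. f i \<noteq> 0}"

definition is_decomp :: "('v::ab_group_add, 'x) vosa_scheme \<Rightarrow> 'v \<Rightarrow> (real \<Rightarrow> 'v) \<Rightarrow> bool" where
  "is_decomp V v c \<longleftrightarrow> finite {w. c w \<noteq> 0} \<and> (\<forall>w. c w \<in> gr V w) \<and> v = sum c {w. c w \<noteq> 0}"

definition comp :: "('v::ab_group_add, 'x) vosa_scheme \<Rightarrow> real \<Rightarrow> 'v \<Rightarrow> 'v" where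
  "comp V w v = (THE c. is_decomp V v c) w"

definition supp :: "('v::ab_group_add, 'x) vosa_scheme \<Rightarrow> 'v \<Rightarrow> real set" where
  "supp V v = {w. comp V w v \<noteq> 0}"

text \<open>Virasoro operators L(m) = omega_(m+1)\<close>
definition Lop :: "('v::ab_group_add, 'x) vosa_scheme \<Rightarrow> int \<Rightarrow> 'v \<Rightarrow> 'v" where
  "Lop V m v = md V (cv V) (m + 1) v"

text \<open>parity sign (-1)^(|u||v|) for u in V_a, v in V_b\<close>
definition psign :: "real \<Rightarrow> real \<Rightarrow> complex" where
  "psign a b = (if a \<notin> \<int> \<and> b \<notin> \<int> then -1 else 1)"

definition is_vosa :: "('v::ab_group_add, 'x) vosa_scheme \<Rightarrow> bool" where
  "is_vosa V \<longleftrightarrow>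
     vector_space (scal V) \<and>
     (\<forall>w. module.subspace (scal V) (gr V w)) \<and>
     (\<forall>w. (\<forall>k::int. w \<noteq> real_of_int k / 2) \<longrightarrow> gr V w = {0}) \<and>
     (\<forall>v. \<exists>!c. is_decomp V v c) \<and>
     (\<forall>w. \<exists>B. finite B \<and> module.span (scal V) B = gr V w) \<and>
     (\<exists>N. \<forall>w<N. gr V w = {0}) \<and>
     (\<forall>u m. Vector_Spaces.linear (scal V) (scal V) (md V u m)) \<and>
     (\<forall>v m. Vector_Spaces.linear (scal V) (scal V) (\<lambda>u. md V u m v)) \<and>
     (\<forall>u v. \<exists>N. \<forall>m\<ge>N. md V u m v = 0) \<and>
     (\<forall>a b u v m. u \<in> gr V a \<longrightarrow> v \<in> gr V b \<longrightarrow> md V u m v \<in> gr V (a + b - of_int m - 1)) \<and>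
     vac V \<in> gr V 0 \<and>
     (\<forall>m v. md V (vac V) m v = (if m = -1 then v else 0)) \<and>
     (\<forall>u m. m \<ge> 0 \<longrightarrow> md V u m (vac V) = 0) \<and>
     (\<forall>u. md V u (-1) (vac V) = u) \<and>
     (\<forall>a b u v w p q r. u \<in> gr V a \<longrightarrow> v \<in> gr V b \<longrightarrow>
        fsum (\<lambda>i. scal V (of_int p gchoose i) (md V (md V u (r + int i) v) (p + q - int i) w))
        = fsum (\<lambda>i. scal V ((-1)^i * (of_int r gchoose i))
             (md V u (p + r - int i) (md V v (q + int i) w)
              - scal V ((-1) powi r * psign a b) (md V v (q + r - int i) (md V u (p + int i) w))))) \<and>
     cv V \<in> gr V 2 \<and>
     (\<forall>m n v. Lop V m (Lop V n v) - Lop V n (Lop V m v)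
        = scal V (of_int (m - n)) (Lop V (m + n) v)
          + scal V (if m + n = 0 then (of_int (m^3 - m) / 12) * cc V else 0) v) \<and>
     (\<forall>w v. v \<in> gr V w \<longrightarrow> Lop V 0 v = scal V (of_real w) v) \<and>
     (\<forall>u m v. md V (Lop V (-1) u) m v = scal V (- of_int m) (md V u (m - 1) v))"

definition is_aut :: "('v::ab_group_add, 'x) vosa_scheme \<Rightarrow> ('v \<Rightarrow> 'v) \<Rightarrow> bool" where
  "is_aut V g \<longleftrightarrow> bij g \<and> Vector_Spaces.linear (scal V) (scal V) g \<and>
     (\<forall>u m v. g (md V u m v) = md V (g u) m (g v)) \<and> g (vac V) = vac V \<and> g (cv V) = cv V"

definition sigma :: "('v::ab_group_add, 'x) vosa_scheme \<Rightarrow> 'v \<Rightarrow> 'v" where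
  "sigma V v = (\<Sum>w\<in>supp V v. if w \<in> \<int> then comp V w v else - comp V w v)"

definition ordS :: "'v set \<Rightarrow> ('v \<Rightarrow> 'v) \<Rightarrow> nat" where
  "ordS S h = (LEAST k. 0 < k \<and> (\<forall>v\<in>S. (h ^^ k) v = v))"

text \<open>S^{r*} w.r.t. the operator h (playing the role of sigma g) of order T\<close>
definition eigS :: "('v::ab_group_add, 'x) vosa_scheme \<Rightarrow> 'v set \<Rightarrow> ('v \<Rightarrow> 'v) \<Rightarrow> nat \<Rightarrow> 'v set" where
  "eigS V S h r = {v \<in> S. h v = scal V (exp (- 2 * of_real pi * \<i> * of_nat r / of_nat (ordS S h))) v}"

definition proj0 :: "('v::ab_group_add, 'x) vosa_scheme \<Rightarrow> 'v set \<Rightarrow> ('v \<Rightarrow> 'v) \<Rightarrow> 'v \<Rightarrow> 'v" where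
  "proj0 V S h v = scal V (1 / of_nat (ordS S h)) (\<Sum>k<ordS S h. (h ^^ k) v)"

text \<open>Res_z Y(u,z) v (1+z)^alpha / z^b = sum_j (alpha choose j) u_{j-b} v\<close>
definition res :: "('v::ab_group_add, 'x) vosa_scheme \<Rightarrow> 'v \<Rightarrow> 'v \<Rightarrow> complex \<Rightarrow> nat \<Rightarrow> 'v" where
  "res V u v \<alpha> b = fsum (\<lambda>j. scal V (\<alpha> gchoose j) (md V u (int j - int b) v))"

definition dlt :: "nat \<Rightarrow> nat \<Rightarrow> nat" where
  "dlt i r = (if r \<le> i then 1 else 0)"

definition lev :: "real \<Rightarrow> nat" where
  "lev n = nat \<lfloor>n\<rfloor>"

definition frc :: "nat \<Rightarrow> real \<Rightarrow> nat" where
  "frc T n = nat \<lfloor>(n - real (lev n)) * real T\<rfloor>"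

text \<open>u o_{g,n} v for u of weight w in S^{r*}, T = o(sigma g)\<close>
definition circ :: "('v::ab_group_add, 'x) vosa_scheme \<Rightarrow> nat \<Rightarrow> real \<Rightarrow> nat \<Rightarrow> real \<Rightarrow> 'v \<Rightarrow> 'v \<Rightarrow> 'v" where
  "circ V T n r w u v =
     (let l = lev n; i = frc T n in
      res V u v (of_real (w - 1 + real (dlt i r) + real l + real r / real T))
        (2 * l + dlt i r + dlt i (T - r) + 1))"

definition Ogn :: "('v::ab_group_add, 'x) vosa_scheme \<Rightarrow> 'v set \<Rightarrow> ('v \<Rightarrow> 'v) \<Rightarrow> real \<Rightarrow> 'v set" where
  "Ogn V S h n = module.span (scal V)
     ({circ V (ordS S h) n r w u v | r w u v.
         r < ordS S h \<and> u \<in> gr V w \<and> u \<in> eigS V S h r \<and> v \<in> S}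
      \<union> {Lop V (-1) u + Lop V 0 u | u. u \<in> S})"

text \<open>u *_{g,n} v for u of weight w in S^{0*}\<close>
definition star_hom :: "('v::ab_group_add, 'x) vosa_scheme \<Rightarrow> real \<Rightarrow> real \<Rightarrow> 'v \<Rightarrow> 'v \<Rightarrow> 'v" where
  "star_hom V n w u v = (let l = lev n in
     (\<Sum>m\<le>l. scal V ((-1)^m * of_nat ((m + l) choose l))
        (res V u v (of_real (w + real l)) (l + m + 1))))"

text \<open>bilinear extension: components in S^{r*} with r > 0 contribute 0\<close>
definition star :: "('v::ab_group_add, 'x) vosa_scheme \<Rightarrow> 'v set \<Rightarrow> ('v \<Rightarrow> 'v) \<Rightarrow> real \<Rightarrow> 'v \<Rightarrow> 'v \<Rightarrow> 'v" where
  "star V S h n u v = (\<Sum>w\<in>supp V u. star_hom V n w (proj0 V S h (comp V w u)) v)"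

definition fixpts :: "('v \<Rightarrow> 'v) \<Rightarrow> 'v set" where
  "fixpts h = {v. \<forall>k. (h ^^ k) v = v}"

end

theory Submission
  imports Defs "HOL-Computational_Algebra.Formal_Power_Series" "HOL-Analysis.Complex_Transcendental"
begin

text \<open>The automorphism \<open>\<sigma>g\<close> preserves weights and has finite order \<open>T'\<close>, so \<open>V\<close> splits into
  its eigenspaces \<open>V\<^sup>r\<^sup>*\<close>, and on \<open>V\<^sup>0\<^sup>*\<close> the data defining \<open>\<circ>\<^sub>g\<^sub>,\<^sub>n\<close> and \<open>*\<^sub>g\<^sub>,\<^sub>n\<close> coincide
  with those defining \<open>\<circ>\<^sub>\<sigma>\<^sub>,\<^sub>\<ell>\<close> and \<open>*\<^sub>\<sigma>\<^sub>,\<^sub>\<ell>\<close>.  For surjectivity, a homogeneous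
  \<open>u \<in> V\<^sup>r\<^sup>*\<close> with \<open>r > 0\<close> satisfies \<open>u \<circ>\<^sub>g\<^sub>,\<^sub>n \<one> \<equiv> (\<beta> choose b-1) u\<close> modulo \<open>L(-1) + L(0)\<close>,
  where \<open>\<beta> = \<delta>\<^sub>i(r) + \<ell> - 1 + r/T'\<close> is not an integer; hence \<open>u \<in> O\<^sub>g\<^sub>,\<^sub>n(V)\<close>, and every
  vector is congruent to its projection onto \<open>V\<^sup>0\<^sup>*\<close>.\<close>

lemma gbinomial_nonzero_if_notin_Nats:
  fixes a :: "'a::field_char_0"
  assumes "a \<notin> \<nat>"
  shows "a gchoose k \<noteq> 0"
proof
  assume "a gchoose k = 0"
  then have "(\<Prod>i = 0..<k. a - of_nat i) = 0"
    by (simp flip: gbinomial_mult_fact)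
  then obtain i :: nat where "a = of_nat i"
    by auto
  with assms show False
    by simp
qed

lemma gbinomial_of_real_nonzero:
  assumes "x \<notin> \<int>"
  shows "(of_real x :: complex) gchoose k \<noteq> 0"
proof (rule gbinomial_nonzero_if_notin_Nats)
  show "(of_real x :: complex) \<notin> \<nat>"
  proof
    assume "(of_real x :: complex) \<in> \<nat>"
    then obtain m where "(of_real x :: complex) = of_nat m"
      by (elim Nats_cases)
    then have "x = of_nat m"
      by (metis of_real_eq_iff of_real_of_nat_eq)
    with assms show False
      by simp
  qed
qed

lemma add_notin_Ints:
  fixes x y :: real
  assumes "x \<in> \<int>" "0 < y" "y < 1"
  shows "x + y \<notin> \<int>"
proof
  assume "x + y \<in> \<int>"
  then have "y \<in> \<int>"
    using Ints_diff[OF _ assms(1)] by force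
  then obtain k :: int where "y = of_int k"
    by (elim Ints_cases)
  with assms(2,3) show False
    by simp
qed

lemma lev_of_nat [simp]: "lev (real k) = k"
  unfolding lev_def by simp

lemma frc_less:
  assumes "0 \<le> n" "0 < T"
  shows "frc T n < T"
proof -
  have "0 \<le> n - real (lev n)" "n - real (lev n) < 1"
    using assms(1) unfolding lev_def by linarith+
  then have "(n - real (lev n)) * real T < real T"
    using assms(2) by simp
  then have "\<lfloor>(n - real (lev n)) * real T\<rfloor> < int T"
    by (simp add: floor_less_iff)
  then show ?thesis
    unfolding frc_def using assms(2) by simp
qed

text \<open>The hypothesis \<open>0 \<le> n\<close> gives \<open>i < T'\<close>, hence \<open>\<delta>\<^sub>i(T') = 0\<close> as for \<open>\<circ>\<^sub>\<sigma>\<^sub>,\<^sub>\<ell>\<close>.\<close>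
lemma circ_zero_eq_lev:
  "0 \<le> n \<Longrightarrow> 0 < T \<Longrightarrow> circ V T n 0 w u v = circ V 1 (real (lev n)) 0 w u v"
  using frc_less[of n T] unfolding circ_def Let_def frc_def dlt_def by simp

lemma fixpts_iff: "v \<in> fixpts h \<longleftrightarrow> h v = v"
proof
  assume "h v = v"
  then have "(h ^^ k) v = v" for k
    by (induct k) simp_all
  then show "v \<in> fixpts h"
    unfolding fixpts_def by blast
next
  assume "v \<in> fixpts h"
  then have "(h ^^ 1) v = v"
    unfolding fixpts_def by blast
  then show "h v = v"
    by simp
qed

locale vertex_superalgebra =
  fixes V :: "('v::ab_group_add) vosa"
  assumes vosa: "is_vosa V"
begin

sublocale vs: vector_space "scal V"
  using vosa by (simp add: is_vosa_def)

abbreviation linear_op :: "('v \<Rightarrow> 'v) \<Rightarrow> bool" where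
  "linear_op f \<equiv> module_hom (scal V) (scal V) f"

lemma subspace_gr: "vs.subspace (gr V w)"
  using vosa by (simp add: is_vosa_def)

lemma ex1_decomp: "\<exists>!c. is_decomp V v c"
  using vosa by (simp add: is_vosa_def)

lemma linear_md: "linear_op (md V u m)"
  using vosa by (simp add: is_vosa_def module_hom_iff_linear)

lemma md_gr: "u \<in> gr V a \<Longrightarrow> v \<in> gr V b \<Longrightarrow> md V u m v \<in> gr V (a + b - of_int m - 1)"
  using vosa by (simp add: is_vosa_def)

lemma md_vac_nonneg: "0 \<le> m \<Longrightarrow> md V u m (vac V) = 0"
  using vosa by (simp add: is_vosa_def)

lemma md_vac_minus_one: "md V u (-1) (vac V) = u"
  using vosa by (simp add: is_vosa_def)

lemma cv_gr: "cv V \<in> gr V 2"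
  using vosa by (simp add: is_vosa_def)

lemma Lop_zero_gr: "x \<in> gr V w \<Longrightarrow> Lop V 0 x = scal V (of_real w) x"
  using vosa by (simp add: is_vosa_def)

lemma md_Lop_minus_one: "md V (Lop V (-1) u) m v = scal V (- of_int m) (md V u (m - 1) v)"
  using vosa by (simp add: is_vosa_def)

lemmas gr_zero = vs.subspace_0[OF subspace_gr]
  and gr_add = vs.subspace_add[OF subspace_gr]
  and gr_scale = vs.subspace_scale[OF subspace_gr]
  and gr_neg = vs.subspace_neg[OF subspace_gr]
  and gr_sum = vs.subspace_sum[OF subspace_gr]

section \<open>Homogeneous components\<close>

lemma comp_sum_homogeneous:
  assumes "finite F" "\<And>w. w \<in> F \<Longrightarrow> x w \<in> gr V w" "v = sum x F"
  shows "comp V w v = (if w \<in> F then x w else 0)"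
proof -
  define c where "c = (\<lambda>w. if w \<in> F then x w else 0)"
  have "v = sum c {w. c w \<noteq> 0}"
    using assms(3) by (auto simp: c_def intro: sum.mono_neutral_cong_right[OF assms(1)])
  then have "is_decomp V v c"
    unfolding is_decomp_def using assms(1,2) gr_zero
    by (auto simp: c_def intro: finite_subset[OF _ assms(1)])
  then have "(THE c. is_decomp V v c) = c"
    using ex1_decomp the1_equality by blast
  then show ?thesis
    unfolding comp_def c_def by simp
qed

lemma is_decomp_comp: "is_decomp V v (\<lambda>w. comp V w v)"
  unfolding comp_def using theI'[OF ex1_decomp] by (simp add: eta_contract_eq)

lemma comp_gr: "comp V w v \<in> gr V w"
  using is_decomp_comp unfolding is_decomp_def by blast

lemma finite_supp: "finite (supp V v)"
  using is_decomp_comp unfolding is_decomp_def supp_def by blast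

lemma sum_comp: "(\<Sum>w\<in>supp V v. comp V w v) = v"
  using is_decomp_comp unfolding is_decomp_def supp_def by simp

lemma comp_homogeneous: "x \<in> gr V w \<Longrightarrow> comp V w' x = (if w' = w then x else 0)"
  using comp_sum_homogeneous[of "{w}" "\<lambda>_. x" x w'] by simp

lemma comp_eqI:
  assumes "\<And>w. comp V w a = comp V w b"
  shows "a = b"
proof -
  have "supp V a = supp V b"
    unfolding supp_def using assms by simp
  then have "(\<Sum>w\<in>supp V a. comp V w a) = (\<Sum>w\<in>supp V b. comp V w b)"
    using assms by simp
  then show ?thesis
    by (simp only: sum_comp)
qed

lemma sum_comp_superset:
  assumes "finite F" "supp V v \<subseteq> F"
  shows "(\<Sum>w\<in>F. comp V w v) = v"
proof -
  have "(\<Sum>w\<in>F. comp V w v) = (\<Sum>w\<in>supp V v. comp V w v)"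
    using assms by (intro sum.mono_neutral_right) (auto simp: supp_def)
  then show ?thesis
    by (simp add: sum_comp)
qed

lemma linear_comp: "linear_op (comp V w)"
proof -
  have "comp V w (a + b) = comp V w a + comp V w b" for a b
  proof -
    let ?F = "supp V a \<union> supp V b"
    have "a + b = (\<Sum>w\<in>?F. comp V w a + comp V w b)"
      using finite_supp by (simp add: sum.distrib sum_comp_superset)
    from comp_sum_homogeneous[OF _ _ this] show ?thesis
      using finite_supp comp_gr gr_add by (auto simp: supp_def)
  qed
  moreover have "comp V w (scal V c a) = scal V c (comp V w a)" for c a
  proof -
    have "scal V c a = (\<Sum>w\<in>supp V a. scal V c (comp V w a))"
      by (simp add: sum_comp flip: vs.scale_sum_right)
    from comp_sum_homogeneous[OF _ _ this] show ?thesis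
      using finite_supp comp_gr gr_scale by (auto simp: supp_def)
  qed
  ultimately show ?thesis
    by (simp add: module_hom_iff vs.module_axioms)
qed

lemmas comp_add = module_hom.add[OF linear_comp]
  and comp_scale = module_hom.scale[OF linear_comp]
  and comp_neg = module_hom.neg[OF linear_comp]

lemma linear_op_sum_comp: "linear_op f \<Longrightarrow> f v = (\<Sum>w\<in>supp V v. f (comp V w v))"
  using module_hom.sum[of "scal V" "scal V" f "\<lambda>w. comp V w v" "supp V v"] by (simp add: sum_comp)

lemma linear_op_eqI_homogeneous:
  assumes "linear_op f" "linear_op f'" "\<And>w x. x \<in> gr V w \<Longrightarrow> f x = f' x"
  shows "f v = f' v"
  using linear_op_sum_comp[OF assms(1), of v] linear_op_sum_comp[OF assms(2), of v]
  by (simp add: assms(3)[OF comp_gr])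

lemma comp_graded_linear_op:
  assumes "linear_op f" "\<And>w x. x \<in> gr V w \<Longrightarrow> f x \<in> gr V w"
  shows "comp V w (f v) = f (comp V w v)"
  using comp_sum_homogeneous[OF finite_supp _ linear_op_sum_comp[OF assms(1), of v]]
    assms(2) comp_gr module_hom.zero[OF assms(1)]
  by (simp add: supp_def)

lemma linear_Lop: "linear_op (Lop V m)"
  unfolding Lop_def by (rule linear_md)

text \<open>An \<open>L(0)\<close>-eigenvector is homogeneous: its components of weight \<open>w' \<noteq> w\<close> are
  killed by \<open>L(0) - w\<close>, which acts on them as the nonzero scalar \<open>w' - w\<close>.\<close>
lemma Lop_zero_eigen_gr:
  assumes "Lop V 0 y = scal V (of_real w) y"
  shows "y \<in> gr V w"
proof -
  have "comp V w' y = 0" if "w' \<noteq> w" for w'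
  proof -
    have "scal V (of_real w') (comp V w' y) = comp V w' (Lop V 0 y)"
      using comp_graded_linear_op[OF linear_Lop, of 0 w' y] Lop_zero_gr[OF comp_gr] Lop_zero_gr gr_scale
      by simp
    also have "\<dots> = scal V (of_real w) (comp V w' y)"
      by (simp add: assms comp_scale)
    finally show ?thesis
      using that by (simp add: vs.scale_right_imp_eq)
  qed
  then have "comp V w y = y"
    by - (rule comp_eqI, simp add: comp_homogeneous[OF comp_gr])
  then show ?thesis
    using comp_gr[of w y] by simp
qed

lemma comp_sigma: "comp V w (sigma V v) = (if w \<in> \<int> then comp V w v else - comp V w v)"
proof -
  have "sigma V v = (\<Sum>w\<in>supp V v. if w \<in> \<int> then comp V w v else - comp V w v)"
    unfolding sigma_def ..
  from comp_sum_homogeneous[OF finite_supp _ this] show ?thesis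
    using comp_gr gr_neg by (auto simp: supp_def)
qed

lemma sigma_homogeneous: "x \<in> gr V w \<Longrightarrow> sigma V x = (if w \<in> \<int> then x else - x)"
  by (rule comp_eqI) (auto simp: comp_sigma comp_homogeneous comp_neg)

lemma sigma_sigma: "sigma V (sigma V v) = v"
  by (rule comp_eqI) (simp add: comp_sigma)

lemma linear_sigma: "linear_op (sigma V)"
proof -
  have "sigma V (a + b) = sigma V a + sigma V b" for a b
    by (rule comp_eqI) (simp add: comp_sigma comp_add)
  moreover have "sigma V (scal V c a) = scal V c (sigma V a)" for c a
    by (rule comp_eqI) (simp add: comp_sigma comp_scale vs.scale_minus_right)
  ultimately show ?thesis
    by (simp add: module_hom_iff vs.module_axioms)
qed

lemma fixpts_eq_eigS_zero: "fixpts h = eigS V UNIV h 0"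
  unfolding eigS_def by (auto simp: fixpts_iff)

lemma ordS_sigma_sigma: "ordS S (sigma V \<circ> sigma V) = 1"
  unfolding ordS_def by (rule Least_equality) (auto simp: sigma_sigma)

section \<open>Congruences modulo \<open>O\<^sub>g\<^sub>,\<^sub>n(V)\<close>\<close>

lemma subspace_Ogn: "vs.subspace (Ogn V S h n)"
  unfolding Ogn_def by (rule vs.subspace_span)

lemma Lop_in_Ogn: "u \<in> S \<Longrightarrow> Lop V (-1) u + Lop V 0 u \<in> Ogn V S h n"
  unfolding Ogn_def by (rule vs.span_base) blast

lemma circ_in_Ogn:
  "r < ordS S h \<Longrightarrow> u \<in> gr V w \<Longrightarrow> u \<in> eigS V S h r \<Longrightarrow> v \<in> S \<Longrightarrow>
    circ V (ordS S h) n r w u v \<in> Ogn V S h n"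
  unfolding Ogn_def by (rule vs.span_base) blast

lemma Lop_minus_one_gr: "x \<in> gr V w \<Longrightarrow> Lop V (-1) x \<in> gr V (w + 1)"
  using md_gr[OF cv_gr, of x w 0] unfolding Lop_def by (simp add: add.commute)

lemma Lop_minus_one_pow_gr: "x \<in> gr V w \<Longrightarrow> (Lop V (-1) ^^ k) x \<in> gr V (w + real k)"
  by (induct k) (auto dest: Lop_minus_one_gr simp: add_ac)

text \<open>Modulo \<open>O\<close>, \<open>L(-1) \<equiv> -L(0)\<close>, and \<open>L(0)\<close> acts on \<open>L(-1)\<^sup>k u \<in> V\<^sub>w\<^sub>+\<^sub>k\<close> as \<open>w + k\<close>.\<close>
lemma Lop_minus_one_pow_congruence:
  assumes u: "u \<in> gr V w"
  shows "(Lop V (-1) ^^ k) u - scal V (\<Prod>i = 0..<k. - of_real w - of_nat i) u \<in> Ogn V UNIV h n"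
proof (induct k)
  case 0
  show ?case
    by (simp add: vs.subspace_0[OF subspace_Ogn])
next
  case (Suc k)
  let ?y = "(Lop V (-1) ^^ k) u"
  let ?c = "\<Prod>i = 0..<k. - of_real w - (of_nat i :: complex)"
  let ?a = "of_real (w + real k) :: complex"
  have L0: "Lop V 0 ?y = scal V ?a ?y"
    using Lop_zero_gr[OF Lop_minus_one_pow_gr[OF u]] .
  have "(\<Prod>i = 0..<Suc k. - of_real w - (of_nat i :: complex)) = - (?a * ?c)"
    by (simp add: prod.atLeast0_lessThan_Suc algebra_simps)
  then have "(Lop V (-1) ^^ Suc k) u - scal V (\<Prod>i = 0..<Suc k. - of_real w - of_nat i) u
      = (Lop V (-1) ?y + Lop V 0 ?y) - scal V ?a (?y - scal V ?c u)"
    by (simp add: L0 vs.scale_right_diff_distrib)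
  also have "\<dots> \<in> Ogn V UNIV h n"
    by (intro vs.subspace_diff[OF subspace_Ogn] vs.subspace_scale[OF subspace_Ogn] Lop_in_Ogn
        Suc UNIV_I)
  finally show ?case .
qed

lemma md_Lop_minus_one_pow:
  "md V ((Lop V (-1) ^^ k) x) m v
    = scal V (\<Prod>t = 0..<k. - (of_int m - of_nat t)) (md V x (m - int k) v)"
proof (induct k arbitrary: x)
  case (Suc k)
  have "md V ((Lop V (-1) ^^ Suc k) x) m v = md V ((Lop V (-1) ^^ k) (Lop V (-1) x)) m v"
    by (simp only: funpow_Suc_right comp_apply)
  also have "\<dots> = scal V (\<Prod>t = 0..<k. - (of_int m - of_nat t)) (md V (Lop V (-1) x) (m - int k) v)"
    by (rule Suc)
  finally show ?case
    by (simp add: md_Lop_minus_one prod.atLeast0_lessThan_Suc algebra_simps)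
qed simp

lemma md_vac_negative: "md V u (-1 - int k) (vac V) = scal V (1 / fact k) ((Lop V (-1) ^^ k) u)"
proof -
  have "(\<Prod>t = 0..<k. - (of_int (-1) - of_nat t) :: complex) = fact k"
    by (induct k) (simp_all add: prod.atLeast0_lessThan_Suc fact_Suc algebra_simps)
  then have "(Lop V (-1) ^^ k) u = scal V (fact k) (md V u (-1 - int k) (vac V))"
    using md_Lop_minus_one_pow[of k u "-1" "vac V"] by (simp add: md_vac_minus_one)
  then show ?thesis
    by simp
qed

lemma md_vac_congruence:
  assumes u: "u \<in> gr V w"
  shows "md V u (-1 - int k) (vac V) - scal V ((- of_real w) gchoose k) u \<in> Ogn V UNIV h n"
proof -
  have "scal V ((- of_real w) gchoose k) u
      = scal V (1 / fact k) (scal V (\<Prod>i = 0..<k. - of_real w - of_nat i) u)"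
    by (simp flip: gbinomial_mult_fact)
  then have "md V u (-1 - int k) (vac V) - scal V ((- of_real w) gchoose k) u
      = scal V (1 / fact k) ((Lop V (-1) ^^ k) u - scal V (\<Prod>i = 0..<k. - of_real w - of_nat i) u)"
    by (simp add: md_vac_negative vs.scale_right_diff_distrib)
  also have "\<dots> \<in> Ogn V UNIV h n"
    by (intro vs.subspace_scale[OF subspace_Ogn] Lop_minus_one_pow_congruence u)
  finally show ?thesis .
qed

lemma fsum_eq_sum: "finite A \<Longrightarrow> (\<And>i. i \<notin> A \<Longrightarrow> f i = 0) \<Longrightarrow> fsum f = sum f A"
  unfolding fsum_def by (rule sum.mono_neutral_left) auto

text \<open>Combined with the previous congruence, Vandermonde's identity evaluates the residue.\<close>
lemma res_vac_congruence:
  assumes u: "u \<in> gr V w" and b: "1 \<le> b"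
  shows "res V u (vac V) \<alpha> b - scal V ((\<alpha> - of_real w) gchoose (b - 1)) u \<in> Ogn V UNIV h n"
proof -
  have res: "res V u (vac V) \<alpha> b = (\<Sum>j<b. scal V (\<alpha> gchoose j) (md V u (int j - int b) (vac V)))"
    unfolding res_def by (rule fsum_eq_sum) (auto simp: md_vac_nonneg)
  have "{..<b} = {0..b - 1}"
    using b by auto
  then have vandermonde: "(\<alpha> - of_real w) gchoose (b - 1)
      = (\<Sum>j<b. (\<alpha> gchoose j) * ((- of_real w) gchoose (b - 1 - j)))"
    using gbinomial_Vandermonde[of \<alpha> "- of_real w" "b - 1"] by simp
  have "res V u (vac V) \<alpha> b - scal V ((\<alpha> - of_real w) gchoose (b - 1)) u
      = (\<Sum>j<b. scal V (\<alpha> gchoose j)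
          (md V u (-1 - int (b - 1 - j)) (vac V) - scal V ((- of_real w) gchoose (b - 1 - j)) u))"
    unfolding res vandermonde vs.scale_sum_left sum_subtractf[symmetric]
    by (intro sum.cong refl) (auto simp: vs.scale_right_diff_distrib of_nat_diff)
  also have "\<dots> \<in> Ogn V UNIV h n"
    by (intro vs.subspace_sum[OF subspace_Ogn] vs.subspace_scale[OF subspace_Ogn]
        md_vac_congruence u)
  finally show ?thesis .
qed

lemma eigenvector_in_Ogn:
  assumes u: "u \<in> gr V w" "u \<in> eigS V UNIV h r" and r: "0 < r" "r < ordS UNIV h"
  shows "u \<in> Ogn V UNIV h n"
proof -
  let ?T = "ordS UNIV h"
  define \<beta> where "\<beta> = real (dlt (frc ?T n) r) + real (lev n) - 1 + real r / real ?T"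
  define b where "b = 2 * lev n + dlt (frc ?T n) r + dlt (frc ?T n) (?T - r) + 1"
  have "circ V ?T n r w u (vac V) = res V u (vac V) (of_real (w + \<beta>)) b"
    unfolding circ_def Let_def \<beta>_def b_def by (simp add: algebra_simps)
  moreover have "circ V ?T n r w u (vac V) \<in> Ogn V UNIV h n"
    using circ_in_Ogn[OF r(2) u UNIV_I] .
  ultimately have "res V u (vac V) (of_real (w + \<beta>)) b \<in> Ogn V UNIV h n"
    by (simp only:)
  moreover have "res V u (vac V) (of_real (w + \<beta>)) b - scal V (of_real \<beta> gchoose (b - 1)) u
      \<in> Ogn V UNIV h n"
    using res_vac_congruence[OF u(1), of b "of_real (w + \<beta>)"] by (simp add: b_def)
  ultimately have "res V u (vac V) (of_real (w + \<beta>)) b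
      - (res V u (vac V) (of_real (w + \<beta>)) b - scal V (of_real \<beta> gchoose (b - 1)) u)
      \<in> Ogn V UNIV h n"
    by (rule vs.subspace_diff[OF subspace_Ogn])
  then have cu: "scal V (of_real \<beta> gchoose (b - 1)) u \<in> Ogn V UNIV h n"
    by simp
  have "\<beta> \<notin> \<int>"
    unfolding \<beta>_def using r by (intro add_notin_Ints) auto
  then have "(of_real \<beta> :: complex) gchoose (b - 1) \<noteq> 0"
    by (rule gbinomial_of_real_nonzero)
  moreover have "scal V (inverse (of_real \<beta> gchoose (b - 1))) (scal V (of_real \<beta> gchoose (b - 1)) u)
      \<in> Ogn V UNIV h n"
    by (rule vs.subspace_scale[OF subspace_Ogn cu])
  ultimately show ?thesis
    by simp
qed

section \<open>Automorphisms\<close>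

lemma linear_aut: "is_aut V g \<Longrightarrow> linear_op g"
  unfolding is_aut_def by (simp add: module_hom_iff_linear)

lemma aut_gr:
  assumes g: "is_aut V g" and x: "x \<in> gr V w"
  shows "g x \<in> gr V w"
proof -
  have "Lop V 0 (g x) = g (Lop V 0 x)"
    using g unfolding is_aut_def Lop_def by simp
  also have "\<dots> = scal V (of_real w) (g x)"
    using Lop_zero_gr[OF x] module_hom.scale[OF linear_aut[OF g]] by simp
  finally show ?thesis
    by (rule Lop_zero_eigen_gr)
qed

lemma aut_sigma_commute:
  assumes g: "is_aut V g"
  shows "g (sigma V v) = sigma V (g v)"
proof -
  have "(g \<circ> sigma V) v = (sigma V \<circ> g) v"
  proof (rule linear_op_eqI_homogeneous[of "g \<circ> sigma V" "sigma V \<circ> g"])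
    show "linear_op (g \<circ> sigma V)"
      by (rule module_hom_compose[OF linear_sigma linear_aut[OF g]])
    show "linear_op (sigma V \<circ> g)"
      by (rule module_hom_compose[OF linear_aut[OF g] linear_sigma])
    fix w x
    assume x: "x \<in> gr V w"
    then show "(g \<circ> sigma V) x = (sigma V \<circ> g) x"
      using sigma_homogeneous[OF x] sigma_homogeneous[OF aut_gr[OF g x]]
        module_hom.neg[OF linear_aut[OF g]]
      by simp
  qed
  then show ?thesis
    by simp
qed

end

section \<open>Eigenspaces of a graded map of finite order\<close>

locale graded_finite_order = vertex_superalgebra V for V :: "('v::ab_group_add) vosa" +
  fixes h :: "'v \<Rightarrow> 'v"
  assumes linear_h: "linear_op h"
    and h_gr: "x \<in> gr V w \<Longrightarrow> h x \<in> gr V w"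
    and finite_order: "\<exists>k>0. h ^^ k = id"
begin

abbreviation T :: nat where "T \<equiv> ordS UNIV h"

lemma order_pos: "0 < T" and funpow_order: "(h ^^ T) v = v"
proof -
  have "\<exists>k. 0 < k \<and> (\<forall>v\<in>UNIV. (h ^^ k) v = v)"
    using finite_order by auto
  then have "0 < T \<and> (\<forall>v\<in>UNIV. (h ^^ T) v = v)"
    unfolding ordS_def by (rule LeastI_ex)
  then show "0 < T" "(h ^^ T) v = v"
    by auto
qed

lemma linear_funpow: "linear_op (h ^^ k)"
proof (induct k)
  case (Suc k)
  then show ?case
    using module_hom_compose[OF Suc linear_h] by (simp only: funpow.simps(2))
qed (simp add: module_hom_iff vs.module_axioms)

lemma funpow_gr: "x \<in> gr V w \<Longrightarrow> (h ^^ k) x \<in> gr V w"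
  by (induct k) (simp_all add: h_gr)

lemma fixpts_comp: "u \<in> fixpts h \<Longrightarrow> comp V w u \<in> fixpts h"
  by (simp add: fixpts_iff flip: comp_graded_linear_op[OF linear_h h_gr])

definition zeta :: complex where
  "zeta = exp (2 * of_real pi * \<i> / of_nat T)"

lemma zeta_pow: "zeta ^ k = exp (2 * of_real pi * \<i> * of_nat k / of_nat T)"
  unfolding zeta_def by (simp add: mult_ac flip: exp_of_nat_mult)

lemma zeta_pow_eq_1_iff: "zeta ^ k = 1 \<longleftrightarrow> T dvd k"
  unfolding zeta_pow using order_pos by (simp add: complex_root_unity_eq_1)

lemma eigS_iff: "x \<in> eigS V UNIV h r \<longleftrightarrow> h x = scal V (inverse (zeta ^ r)) x"
  unfolding eigS_def zeta_pow by (simp flip: exp_minus)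

lemma sum_zeta_pow:
  assumes "k < T"
  shows "(\<Sum>r<T. zeta ^ (r * k)) = (if k = 0 then of_nat T else 0)"
proof (cases "k = 0")
  case False
  then have "zeta ^ k \<noteq> 1" "(zeta ^ k) ^ T = 1"
    using assms zeta_pow_eq_1_iff by (auto simp flip: power_mult dest: dvd_imp_le)
  then have "(\<Sum>r<T. (zeta ^ k) ^ r) = 0"
    by (simp add: sum_gp_strict)
  then show ?thesis
    using False by (simp add: mult.commute[of _ k] power_mult)
qed simp

definition eig_proj :: "nat \<Rightarrow> 'v \<Rightarrow> 'v" where
  "eig_proj r c = scal V (1 / of_nat T) (\<Sum>k<T. scal V (zeta ^ (r * k)) ((h ^^ k) c))"

lemma linear_eig_proj: "linear_op (eig_proj r)"
  unfolding module_hom_iff eig_proj_def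
  by (simp add: vs.module_axioms module_hom.add[OF linear_funpow] module_hom.scale[OF linear_funpow]
      vs.scale_right_distrib sum.distrib vs.scale_sum_right mult_ac)

lemma eig_proj_gr: "c \<in> gr V w \<Longrightarrow> eig_proj r c \<in> gr V w"
  unfolding eig_proj_def by (intro gr_scale gr_sum funpow_gr)

lemma eig_proj_eigS: "eig_proj r c \<in> eigS V UNIV h r"
proof -
  define f where "f = (\<lambda>k. scal V (zeta ^ (r * k)) ((h ^^ k) c))"
  have "zeta \<noteq> 0"
    by (simp add: zeta_def)
  have "zeta ^ (r * T) = 1"
    by (simp add: zeta_pow_eq_1_iff)
  then have f_order: "f T = f 0"
    by (simp add: f_def funpow_order)
  have "h (eig_proj r c) = scal V (1 / of_nat T) (\<Sum>k<T. scal V (zeta ^ (r * k)) ((h ^^ Suc k) c))"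
    unfolding eig_proj_def
    by (simp add: module_hom.scale[OF linear_h] module_hom.sum[OF linear_h])
  also have "(\<Sum>k<T. scal V (zeta ^ (r * k)) ((h ^^ Suc k) c))
      = scal V (inverse (zeta ^ r)) (\<Sum>k<T. f (Suc k))"
    unfolding f_def vs.scale_sum_right using \<open>zeta \<noteq> 0\<close>
    by (intro sum.cong) (simp_all add: power_add field_simps)
  also have "(\<Sum>k<T. f (Suc k)) = (\<Sum>k<T. f k)"
    using sum.lessThan_Suc_shift[of f T] f_order by (simp add: add.commute)
  also have "scal V (1 / of_nat T) (scal V (inverse (zeta ^ r)) (\<Sum>k<T. f k))
      = scal V (inverse (zeta ^ r)) (eig_proj r c)"
    unfolding eig_proj_def f_def by (rule vs.scale_left_commute)
  finally show ?thesis
    unfolding eigS_iff .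
qed

lemma sum_eig_proj: "(\<Sum>r<T. eig_proj r c) = c"
proof -
  have "(\<Sum>r<T. eig_proj r c)
      = scal V (1 / of_nat T) (\<Sum>r<T. \<Sum>k<T. scal V (zeta ^ (r * k)) ((h ^^ k) c))"
    unfolding eig_proj_def by (rule vs.scale_sum_right[symmetric])
  also have "(\<Sum>r<T. \<Sum>k<T. scal V (zeta ^ (r * k)) ((h ^^ k) c))
      = (\<Sum>k<T. scal V (\<Sum>r<T. zeta ^ (r * k)) ((h ^^ k) c))"
    by (subst sum.swap) (simp only: vs.scale_sum_left)
  also have "\<dots> = (\<Sum>k<T. if k = 0 then scal V (of_nat T) c else 0)"
    by (intro sum.cong) (simp_all add: sum_zeta_pow)
  finally show ?thesis
    using order_pos by simp
qed

lemma eig_proj_zero_fixpts: "eig_proj 0 v \<in> fixpts h"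
  using eig_proj_eigS[of 0 v] by (simp add: eigS_iff fixpts_iff)

lemma homogeneous_minus_eig_proj_zero_in_Ogn:
  assumes x: "x \<in> gr V w"
  shows "x - eig_proj 0 x \<in> Ogn V UNIV h n"
proof -
  have "eig_proj 0 x + (\<Sum>r\<in>{..<T} - {0}. eig_proj r x) = x"
    using sum.remove[of "{..<T}" 0 "\<lambda>r. eig_proj r x"] order_pos by (simp add: sum_eig_proj)
  then have "x - eig_proj 0 x = (\<Sum>r\<in>{..<T} - {0}. eig_proj r x)"
    by (metis add_diff_cancel_left')
  also have "\<dots> \<in> Ogn V UNIV h n"
  proof (rule vs.subspace_sum[OF subspace_Ogn])
    fix r
    assume "r \<in> {..<T} - {0}"
    then show "eig_proj r x \<in> Ogn V UNIV h n"
      using eigenvector_in_Ogn[OF eig_proj_gr[OF x] eig_proj_eigS] by simp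
  qed
  finally show ?thesis .
qed

lemma minus_eig_proj_zero_in_Ogn: "v - eig_proj 0 v \<in> Ogn V UNIV h n"
proof -
  have "v - eig_proj 0 v = (\<Sum>w\<in>supp V v. comp V w v - eig_proj 0 (comp V w v))"
    using module_hom.sum[OF linear_eig_proj, of 0 "\<lambda>w. comp V w v" "supp V v"]
    by (simp add: sum_subtractf sum_comp)
  also have "\<dots> \<in> Ogn V UNIV h n"
    by (rule vs.subspace_sum[OF subspace_Ogn] homogeneous_minus_eig_proj_zero_in_Ogn[OF comp_gr])+
  finally show ?thesis .
qed

lemma Ogn_fixpts_subset:
  assumes "0 \<le> n"
  shows "Ogn V (fixpts h) (sigma V \<circ> sigma V) (real (lev n)) \<subseteq> Ogn V UNIV h n"
  unfolding Ogn_def[of V "fixpts h"] ordS_sigma_sigma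
proof (intro vs.span_minimal subspace_Ogn subsetI)
  fix x
  assume "x \<in> {circ V 1 (real (lev n)) r w u v |r w u v.
      r < 1 \<and> u \<in> gr V w \<and> u \<in> eigS V (fixpts h) (sigma V \<circ> sigma V) r \<and> v \<in> fixpts h}
    \<union> {Lop V (-1) u + Lop V 0 u |u. u \<in> fixpts h}"
  then consider (circ) w u v where "x = circ V 1 (real (lev n)) 0 w u v" "u \<in> gr V w" "u \<in> fixpts h"
    | (Lop) u where "x = Lop V (-1) u + Lop V 0 u"
    unfolding eigS_def by blast
  then show "x \<in> Ogn V UNIV h n"
  proof cases
    case circ
    have "circ V T n 0 w u v \<in> Ogn V UNIV h n"
      using circ_in_Ogn[OF order_pos circ(2)] circ(3) by (simp add: fixpts_eq_eigS_zero)
    then show ?thesis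
      unfolding circ(1) circ_zero_eq_lev[OF assms order_pos, symmetric] .
  qed (simp add: Lop_in_Ogn)
qed

lemma star_fixpts_eq:
  assumes "u \<in> fixpts h"
  shows "star V (fixpts h) (sigma V \<circ> sigma V) (real (lev n)) u v = star V UNIV h n u v"
  unfolding star_def
proof (intro sum.cong refl)
  fix w
  have "(h ^^ k) (comp V w u) = comp V w u" for k
    using fixpts_comp[OF assms] unfolding fixpts_def by blast
  then have "proj0 V UNIV h (comp V w u) = comp V w u"
    unfolding proj0_def using order_pos by (simp add: vs.sum_constant_scale)
  moreover have "proj0 V (fixpts h) (sigma V \<circ> sigma V) (comp V w u) = comp V w u"
    unfolding proj0_def ordS_sigma_sigma by simp
  ultimately show "star_hom V (real (lev n)) w (proj0 V (fixpts h) (sigma V \<circ> sigma V) (comp V w u)) v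
      = star_hom V n w (proj0 V UNIV h (comp V w u)) v"
    unfolding star_hom_def by simp
qed

end

lemma (in vertex_superalgebra) graded_finite_order_sigma_aut:
  assumes g: "is_aut V g" and g_order: "\<exists>k>0. g ^^ k = id"
  shows "graded_finite_order V (sigma V \<circ> g)"
proof (intro graded_finite_order.intro graded_finite_order_axioms.intro)
  show "vertex_superalgebra V"
    by (rule vertex_superalgebra_axioms)
  show "linear_op (sigma V \<circ> g)"
    by (rule module_hom_compose[OF linear_aut[OF g] linear_sigma])
  show "(sigma V \<circ> g) x \<in> gr V w" if "x \<in> gr V w" for x w
    using sigma_homogeneous[OF aut_gr[OF g that]] aut_gr[OF g that] gr_neg by simp
  obtain k where k: "0 < k" "g ^^ k = id"
    using g_order by blast
  have square: "(sigma V \<circ> g) ^^ 2 = g ^^ 2"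
    by (rule ext) (simp add: numeral_2_eq_2 aut_sigma_commute[OF g] sigma_sigma)
  have "(sigma V \<circ> g) ^^ (2 * k) = ((sigma V \<circ> g) ^^ 2) ^^ k"
    by (rule funpow_mult[symmetric])
  also have "\<dots> = (g ^^ 2) ^^ k"
    by (simp only: square)
  also have "\<dots> = (g ^^ k) ^^ 2"
    by (simp add: funpow_mult mult.commute)
  finally have "(sigma V \<circ> g) ^^ (2 * k) = id"
    using k(2) by (simp add: numeral_2_eq_2)
  then show "\<exists>k>0. (sigma V \<circ> g) ^^ k = id"
    using k(1) by (intro exI[of _ "2 * k"]) simp
qed

theorem lemma3p2:
  fixes V :: "('v::ab_group_add) vosa" and g :: "'v \<Rightarrow> 'v" and n :: real
  assumes "is_vosa V"
    and "is_aut V g"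
    and "\<exists>k>0. g ^^ k = id"
    and "\<exists>k::nat. n = real k / real (ordS UNIV (sigma V \<circ> g))"
  shows "fixpts (sigma V \<circ> g) = eigS V UNIV (sigma V \<circ> g) 0
    \<and> Ogn V (fixpts (sigma V \<circ> g)) (sigma V \<circ> sigma V) (real (lev n))
        \<subseteq> Ogn V UNIV (sigma V \<circ> g) n
    \<and> (\<forall>u\<in>fixpts (sigma V \<circ> g). \<forall>v\<in>fixpts (sigma V \<circ> g).
         star V (fixpts (sigma V \<circ> g)) (sigma V \<circ> sigma V) (real (lev n)) u v
         = star V UNIV (sigma V \<circ> g) n u v)
    \<and> (\<forall>v. \<exists>u\<in>fixpts (sigma V \<circ> g). v - u \<in> Ogn V UNIV (sigma V \<circ> g) n)"
proof -
  interpret vertex_superalgebra V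
    using assms(1) by (rule vertex_superalgebra.intro)
  interpret graded_finite_order V "sigma V \<circ> g"
    by (rule graded_finite_order_sigma_aut[OF assms(2,3)])
  have "0 \<le> n"
    using assms(4) by auto
  then show ?thesis
    using fixpts_eq_eigS_zero Ogn_fixpts_subset star_fixpts_eq eig_proj_zero_fixpts
      minus_eig_proj_zero_in_Ogn
    by blast
qed

end
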